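(* Fix $0<\varepsilon<1/4$ and $0<\beta<1/4$. Let $\delta(n)$ be a positive non-increasing sequence such that for every positive integer $n$, $$P_n:=\frac{e^\varepsilon}{e^\varepsilon+1}+(e^\varepsilon+1)\sum_{j=1}^n\delta(j)\le 1-\beta,$$ and such that $b(n):=1/\delta(n)$ is an integer for every $n$. Define $S(1)=2$ and $S(n+1)=b(n)^{S(n)}$. Then for every positive integer $n$ there exists a distribution $\mathcal{D}_n$ over databases $D\in[S(n)]^n$, where $[S(n)]=\{0,1,\dots,S(n)-1\}$, such that for every $(\varepsilon,\delta(n))$-differentially private mechanism $\mathcal{M}:[S(n)]^n\to[S(n)]$, $$\Pr[\min D\le \mathcal{M}(D)\le \max D]\le P_n,$$ where the probability is over $D\sim\mathcal{D}_n$ and the coins of $\mathcal{M}$.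
   Context: A randomized algorithm $M:X^n\to Y$ is $(\varepsilon,\delta)$-differentially private if for every two databases $D,D'\in X^n$ differing in exactly one row and every set $T\subseteq Y$, $\Pr[M(D)\in T]\le e^{\varepsilon}\Pr[M(D')\in T]+\delta$. *)

theory Defs
  imports "HOL-Probability.Probability"
begin

definition neighbors :: "'a list \<Rightarrow> 'a list \<Rightarrow> bool" where
  "neighbors D D' \<longleftrightarrow> length D = length D' \<and>
     card {i. i < length D \<and> D ! i \<noteq> D' ! i} = 1"

definition diff_private :: "'a list set \<Rightarrow> real \<Rightarrow> real \<Rightarrow> ('a list \<Rightarrow> 'b pmf) \<Rightarrow> bool" where
  "diff_private X eps del M \<longleftrightarrow>
     (\<forall>D\<in>X. \<forall>D'\<in>X. neighbors D D' \<longrightarrow>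
        (\<forall>T. measure_pmf.prob (M D) T \<le> exp eps * measure_pmf.prob (M D') T + del))"

definition dbs :: "nat \<Rightarrow> nat \<Rightarrow> nat list set" where
  "dbs S n = {D. length D = n \<and> set D \<subseteq> {..<S}}"

text \<open>The tower S(1) = 2, S(n+1) = b(n)^S(n) with b(n) = 1/delta(n) (an integer).
  Index 0 is unused.\<close>
fun Stower :: "(nat \<Rightarrow> real) \<Rightarrow> nat \<Rightarrow> nat" where
  "Stower \<delta> 0 = 0"
| "Stower \<delta> (Suc 0) = 2"
| "Stower \<delta> (Suc (Suc n)) = nat \<lfloor>1 / \<delta> (Suc n)\<rfloor> ^ Stower \<delta> (Suc n)"

end

theory Submission
  imports Defs
begin

text \<open>Induction on n via a reduction.  From an (\<epsilon>,\<delta>(n+1))-private mechanism M' for n+1 rows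
  over [b^S], with b = 1/\<delta>(n), we build a mechanism for n rows over [S]: draw w uniformly from
  [b^S], read w as S base-b digits, replace each row x of D by w truncated to its first x digits,
  append w itself as a last row, run M' and output how many leading digits the answer shares with w.
  This mechanism is (\<epsilon>,\<delta>(n+1))-private, hence (\<epsilon>,\<delta>(n))-private.  Whenever M' answers between
  the smallest and the largest row, the reduced mechanism answers between min D and max D, unless
  the answer of M' agrees with w on its first max D + 1 digits.  Replacing the last row w by its
  truncation to max D digits is a single row change, after which M' sees only the first max D
  digits of w; so this happens with probability at most e^\<epsilon>/b + \<delta>(n+1) = e^\<epsilon> \<delta>(n) + \<delta>(n+1).
  The base case is the two one-row databases [0] and [1], where privacy bounds the success
  probability by e^\<epsilon>/(e^\<epsilon>+1) + \<delta>(1).\<close>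

lemma measure_bind_pmf:
  "measure_pmf.prob (bind_pmf p f) A = measure_pmf.expectation p (\<lambda>x. measure_pmf.prob (f x) A)"
proof -
  have int: "integrable (measure_pmf p) (\<lambda>x. measure_pmf.prob (f x) A)"
    by (rule measure_pmf.integrable_const_bound[where B=1]) auto
  have "ennreal (measure_pmf.prob (bind_pmf p f) A) = (\<integral>\<^sup>+x. emeasure (f x) A \<partial>p)"
    by (simp add: measure_pmf.emeasure_eq_measure[symmetric])
  also have "\<dots> = ennreal (\<integral>x. measure_pmf.prob (f x) A \<partial>p)"
    by (simp add: measure_pmf.emeasure_eq_measure nn_integral_eq_integral[OF int])
  finally show ?thesis
    by (subst (asm) ennreal_inj) (auto intro: integral_nonneg_AE)
qed

lemma integral_pmf_of_lessThan:
  fixes f :: "nat \<Rightarrow> real"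
  assumes "0 < N"
  shows "measure_pmf.expectation (pmf_of_set {..<N}) f = (\<Sum>w<N. f w) / N"
  using assms by (subst integral_pmf_of_set) (auto simp: lessThan_empty_iff)

lemma sum_lessThan_mult:
  fixes f :: "nat \<Rightarrow> 'a :: comm_monoid_add"
  shows "(\<Sum>w<a * c. f w) = (\<Sum>i<a. \<Sum>j<c. f (i * c + j))"
proof -
  have "(\<Sum>w<a * c. f w) = (\<Sum>i<a. sum f {i * c..<i * c + c})"
    by (rule sum.nat_group[symmetric])
  also have "\<dots> = (\<Sum>i<a. \<Sum>j<c. f (i * c + j))"
  proof (rule sum.cong[OF refl])
    fix i
    have "sum f {0 + i * c..<c + i * c} = (\<Sum>j\<in>{0..<c}. f (j + i * c))"
      by (rule sum.shift_bounds_nat_ivl)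
    then show "sum f {i * c..<i * c + c} = (\<Sum>j<c. f (i * c + j))"
      by (simp add: add.commute atLeast0LessThan)
  qed
  finally show ?thesis .
qed

lemma div_eq_if_between_Min_Max:
  fixes A :: "nat set"
  assumes "finite A" "A \<noteq> {}" "\<And>r. r \<in> A \<Longrightarrow> r div m = c"
    and "Min A \<le> z" "z \<le> Max A"
  shows "z div m = c"
  using div_le_mono[OF assms(4), of m] div_le_mono[OF assms(5), of m] assms(1-3) by force

subsection \<open>Base-b digits\<close>

lemma div_power_diff:
  fixes b :: nat
  assumes "j \<le> k" "k \<le> S"
  shows "z div b ^ (S - j) = z div b ^ (S - k) div b ^ (k - j)"
proof -
  have "S - j = (S - k) + (k - j)" using assms by simp
  then show ?thesis by (simp add: power_add div_mult2_eq)
qed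

lemma div_power_eq_mono:
  fixes b :: nat
  assumes "z div b ^ (S - k) = w div b ^ (S - k)" "j \<le> k" "k \<le> S"
  shows "z div b ^ (S - j) = w div b ^ (S - j)"
  using assms div_power_diff[OF assms(2,3)] by metis

text \<open>Reading w < b^S as S base-b digits, the first x digits of w followed by zeros.\<close>
definition digit_prefix :: "nat \<Rightarrow> nat \<Rightarrow> nat \<Rightarrow> nat \<Rightarrow> nat" where
  "digit_prefix b S x w = w div b ^ (S - x) * b ^ (S - x)"

lemma digit_prefix_le: "digit_prefix b S x w \<le> w"
  by (simp add: digit_prefix_def)

lemma digit_prefix_div:
  assumes "0 < b" "j \<le> x" "x \<le> S"
  shows "digit_prefix b S x w div b ^ (S - j) = w div b ^ (S - j)"
  using assms by (simp add: digit_prefix_def div_power_diff[OF assms(2,3)])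

lemma digit_prefix_cong:
  assumes "w div b ^ (S - h) = w' div b ^ (S - h)" "x \<le> h" "h \<le> S"
  shows "digit_prefix b S x w = digit_prefix b S x w'"
  using div_power_eq_mono[OF assms] by (simp add: digit_prefix_def)

text \<open>Agreement on k leading digits implies agreement on fewer, so this counts the leading digits
  z shares with w, capped at S - 1 so that the reduced mechanism answers in [S].\<close>
definition agreement :: "nat \<Rightarrow> nat \<Rightarrow> nat \<Rightarrow> nat \<Rightarrow> nat" where
  "agreement b S w z = card {k \<in> {1..<S}. z div b ^ (S - k) = w div b ^ (S - k)}"

lemma agreement_ge:
  assumes "z div b ^ (S - l) = w div b ^ (S - l)" "l < S"
  shows "l \<le> agreement b S w z"
proof -
  have "{1..l} \<subseteq> {k \<in> {1..<S}. z div b ^ (S - k) = w div b ^ (S - k)}"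
    using assms div_power_eq_mono[OF assms(1)] by auto
  from card_mono[OF _ this] show ?thesis by (simp add: agreement_def)
qed

lemma agreement_le:
  assumes "z div b ^ (S - Suc h) \<noteq> w div b ^ (S - Suc h)"
  shows "agreement b S w z \<le> h"
proof -
  have "{k \<in> {1..<S}. z div b ^ (S - k) = w div b ^ (S - k)} \<subseteq> {1..h}"
    using assms div_power_eq_mono[of z b S _ w "Suc h"] by (force simp: not_le)
  from card_mono[OF _ this] show ?thesis by (simp add: agreement_def)
qed

text \<open>Split w < a b c into a high block w div (c b), one base-b digit, and a low block below c.
  An answer depending only on the high block matches w down to that digit with probability at
  most 1/b on average.\<close>
lemma sum_prob_guess_digit_le:
  fixes N :: "nat \<Rightarrow> nat pmf"
  shows "(\<Sum>w<a * b * c. measure_pmf.prob (N (w div (c * b))) {z. z div c = w div c})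
           \<le> real (a * c)"
proof -
  define P where "P q d = measure_pmf.prob (N q) {z. z div c = d}" for q d
  have guess: "(\<Sum>d<b. P q (q * b + d)) \<le> 1" for q
  proof -
    have "(\<Sum>d<b. P q (q * b + d)) = measure_pmf.prob (N q) (\<Union>d<b. {z. z div c = q * b + d})"
      unfolding P_def
      by (rule measure_pmf.finite_measure_finite_Union[symmetric]) (auto simp: disjoint_family_on_def)
    then show ?thesis by simp
  qed
  have "(\<Sum>i<a * b. P (i div b) i) = (\<Sum>q<a. \<Sum>d<b. P ((q * b + d) div b) (q * b + d))"
    by (rule sum_lessThan_mult)
  also have "\<dots> = (\<Sum>q<a. \<Sum>d<b. P q (q * b + d))"
    by (intro sum.cong refl) auto
  also have "\<dots> \<le> (\<Sum>q<a. 1)"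
    by (rule sum_mono) (rule guess)
  finally have digit: "(\<Sum>i<a * b. P (i div b) i) \<le> a"
    by simp
  have "(\<Sum>w<a * b * c. P (w div (c * b)) (w div c))
      = (\<Sum>i<a * b. \<Sum>j<c. P ((i * c + j) div (c * b)) ((i * c + j) div c))"
    by (rule sum_lessThan_mult)
  also have "\<dots> = (\<Sum>i<a * b. \<Sum>j<c. P (i div b) i)"
    by (intro sum.cong refl) (auto simp: div_mult2_eq)
  also have "\<dots> = c * (\<Sum>i<a * b. P (i div b) i)"
    by (simp add: sum_distrib_left)
  also have "\<dots> \<le> c * a"
    using digit by (simp add: mult_left_mono)
  finally show ?thesis
    by (simp add: P_def mult.commute)
qed

subsection \<open>Neighbouring databases and privacy\<close>

lemma neighbors_or_eq_if_card_le_1: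
  assumes "length D = length D'" "card {i. i < length D \<and> D ! i \<noteq> D' ! i} \<le> 1"
  shows "D = D' \<or> neighbors D D'"
proof (cases "card {i. i < length D \<and> D ! i \<noteq> D' ! i} = 0")
  case True
  then have "D = D'"
    using assms(1) by (auto intro: nth_equalityI)
  then show ?thesis ..
next
  case False
  with assms(2) have "card {i. i < length D \<and> D ! i \<noteq> D' ! i} = 1"
    by linarith
  with assms(1) show ?thesis
    by (simp add: neighbors_def)
qed

lemma neighbors_or_eq_snoc: "xs @ [a] = xs @ [a'] \<or> neighbors (xs @ [a]) (xs @ [a'])"
proof (rule neighbors_or_eq_if_card_le_1)
  have "{i. i < length (xs @ [a]) \<and> (xs @ [a]) ! i \<noteq> (xs @ [a']) ! i} \<subseteq> {length xs}"
    by (auto simp: nth_append less_Suc_eq)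
  from card_mono[OF _ this]
  show "card {i. i < length (xs @ [a]) \<and> (xs @ [a]) ! i \<noteq> (xs @ [a']) ! i} \<le> 1"
    by simp
qed simp

lemma neighbors_or_eq_map_append:
  assumes "neighbors D D'"
  shows "map f D @ ys = map f D' @ ys \<or> neighbors (map f D @ ys) (map f D' @ ys)"
proof (rule neighbors_or_eq_if_card_le_1)
  have len: "length D = length D'"
    using assms by (simp add: neighbors_def)
  then show "length (map f D @ ys) = length (map f D' @ ys)"
    by simp
  have "{i. i < length (map f D @ ys) \<and> (map f D @ ys) ! i \<noteq> (map f D' @ ys) ! i}
      \<subseteq> {i. i < length D \<and> D ! i \<noteq> D' ! i}"
    using len by (auto simp: nth_append)
  from card_mono[OF _ this] assms len
  show "card {i. i < length (map f D @ ys) \<and> (map f D @ ys) ! i \<noteq> (map f D' @ ys) ! i} \<le> 1"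
    by (simp add: neighbors_def)
qed

lemma diff_private_le:
  assumes "diff_private X \<epsilon> \<delta> M" "D \<in> X" "D' \<in> X" "D = D' \<or> neighbors D D'"
    and "0 \<le> \<epsilon>" "0 \<le> \<delta>"
  shows "measure_pmf.prob (M D) T \<le> exp \<epsilon> * measure_pmf.prob (M D') T + \<delta>"
  using assms(4)
proof
  assume "D = D'"
  have "measure_pmf.prob (M D) T \<le> exp \<epsilon> * measure_pmf.prob (M D) T"
    using assms(5) by (simp add: mult_le_cancel_right1)
  with \<open>D = D'\<close> assms(6) show ?thesis
    by simp
next
  assume "neighbors D D'"
  with assms(1-3) show ?thesis
    by (auto simp: diff_private_def)
qed

lemma diff_private_mono:
  "diff_private X \<epsilon> \<delta> M \<Longrightarrow> \<delta> \<le> \<delta>' \<Longrightarrow> diff_private X \<epsilon> \<delta>' M"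
  unfolding diff_private_def by (meson add_left_mono order_trans)

lemma average_le_affine:
  fixes f g :: "nat \<Rightarrow> real"
  assumes "0 < N" "\<And>w. w < N \<Longrightarrow> f w \<le> a * g w + d"
  shows "(\<Sum>w<N. f w) / N \<le> a * ((\<Sum>w<N. g w) / N) + d"
proof -
  have "(\<Sum>w<N. f w) \<le> (\<Sum>w<N. a * g w + d)"
    using assms(2) by (intro sum_mono) simp
  also have "\<dots> = a * (\<Sum>w<N. g w) + N * d"
    by (simp add: sum.distrib sum_distrib_left)
  finally show ?thesis
    using assms(1) by (simp add: field_simps)
qed

subsection \<open>The reduction\<close>

definition embed_db :: "nat \<Rightarrow> nat \<Rightarrow> nat list \<Rightarrow> nat \<Rightarrow> nat list" where
  "embed_db b S D w = map (\<lambda>x. digit_prefix b S x w) D @ [w]"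

definition reduce_mech :: "nat \<Rightarrow> nat \<Rightarrow> (nat list \<Rightarrow> nat pmf) \<Rightarrow> nat list \<Rightarrow> nat pmf" where
  "reduce_mech b S M D =
     bind_pmf (pmf_of_set {..<b ^ S}) (\<lambda>w. map_pmf (agreement b S w) (M (embed_db b S D w)))"

definition lift_dist :: "nat \<Rightarrow> nat \<Rightarrow> nat list pmf \<Rightarrow> nat list pmf" where
  "lift_dist b S P = bind_pmf P (\<lambda>D. map_pmf (embed_db b S D) (pmf_of_set {..<b ^ S}))"

definition success :: "nat list pmf \<Rightarrow> (nat list \<Rightarrow> nat pmf) \<Rightarrow> real" where
  "success P M = measure_pmf.prob (bind_pmf P (\<lambda>D. map_pmf (\<lambda>y. (D, y)) (M D)))
                   {(D, y). Min (set D) \<le> y \<and> y \<le> Max (set D)}"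

lemma success_eq:
  "success P M =
     measure_pmf.expectation P (\<lambda>D. measure_pmf.prob (M D) {Min (set D)..Max (set D)})"
  by (simp add: success_def measure_bind_pmf atLeastAtMost_def atLeast_def atMost_def Int_def)

lemma success_lift_dist:
  "success (lift_dist b S P) M =
     measure_pmf.expectation P (\<lambda>D. measure_pmf.expectation (pmf_of_set {..<b ^ S})
       (\<lambda>w. measure_pmf.prob (M (embed_db b S D w))
              {Min (set (embed_db b S D w))..Max (set (embed_db b S D w))}))"
  by (simp add: success_def lift_dist_def bind_assoc_pmf bind_map_pmf measure_bind_pmf
        atLeastAtMost_def atLeast_def atMost_def Int_def)

lemma embed_db_in_dbs:
  assumes "D \<in> dbs S n" "w < b ^ S"
  shows "embed_db b S D w \<in> dbs (b ^ S) (Suc n)"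
  using assms digit_prefix_le[of b S _ w] by (auto simp: dbs_def embed_db_def intro: le_less_trans)

lemma embed_db_neighbors_or_eq:
  "neighbors D D' \<Longrightarrow>
     embed_db b S D w = embed_db b S D' w \<or> neighbors (embed_db b S D w) (embed_db b S D' w)"
  unfolding embed_db_def by (rule neighbors_or_eq_map_append)

lemma set_pmf_lift_dist:
  assumes "0 < b" "set_pmf P \<subseteq> dbs S n"
  shows "set_pmf (lift_dist b S P) \<subseteq> dbs (b ^ S) (Suc n)"
  using assms embed_db_in_dbs by (auto simp: lift_dist_def lessThan_empty_iff)

lemma prob_reduce_mech:
  assumes "0 < b"
  shows "measure_pmf.prob (reduce_mech b S M D) T =
    (\<Sum>w<b ^ S. measure_pmf.prob (M (embed_db b S D w)) (agreement b S w -` T)) / b ^ S"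
  using assms by (simp add: reduce_mech_def measure_bind_pmf integral_pmf_of_lessThan)

lemma diff_private_reduce_mech:
  assumes "0 < b" "0 \<le> \<epsilon>" "0 \<le> \<delta>"
    and "diff_private (dbs (b ^ S) (Suc n)) \<epsilon> \<delta> M"
  shows "diff_private (dbs S n) \<epsilon> \<delta> (reduce_mech b S M)"
  unfolding diff_private_def
proof (intro ballI impI allI)
  fix D D' T
  assume D: "D \<in> dbs S n" "D' \<in> dbs S n" "neighbors D D'"
  have "measure_pmf.prob (M (embed_db b S D w)) (agreement b S w -` T)
      \<le> exp \<epsilon> * measure_pmf.prob (M (embed_db b S D' w)) (agreement b S w -` T) + \<delta>"
    if "w < b ^ S" for w
    using assms(2,3) embed_db_in_dbs[OF D(1) that] embed_db_in_dbs[OF D(2) that]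
    by (intro diff_private_le[OF assms(4)] embed_db_neighbors_or_eq[OF D(3)])
  then show "measure_pmf.prob (reduce_mech b S M D) T
      \<le> exp \<epsilon> * measure_pmf.prob (reduce_mech b S M D') T + \<delta>"
    unfolding prob_reduce_mech[OF assms(1)] using assms(1) by (intro average_le_affine) simp_all
qed

text \<open>All rows of embed_db b S D w agree with w on the first min D digits, hence so does
  every z between the smallest and the largest row.\<close>
lemma agreement_between_or_guess:
  assumes "0 < b" "D \<noteq> []" "set D \<subseteq> {..<S}"
    and "z \<in> {Min (set (embed_db b S D w))..Max (set (embed_db b S D w))}"
  shows "agreement b S w z \<in> {Min (set D)..Max (set D)} \<or>
         z div b ^ (S - Suc (Max (set D))) = w div b ^ (S - Suc (Max (set D)))"
proof -
  define lo where "lo = Min (set D)"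
  have lo: "lo \<in> set D" "\<And>x. x \<in> set D \<Longrightarrow> lo \<le> x"
    using assms(2) by (simp_all add: lo_def)
  have rows: "r div b ^ (S - lo) = w div b ^ (S - lo)" if "r \<in> set (embed_db b S D w)" for r
    using that assms(1,3) lo(2) by (auto simp: embed_db_def digit_prefix_div)
  have "z div b ^ (S - lo) = w div b ^ (S - lo)"
    using assms(4)
    by (intro div_eq_if_between_Min_Max[of "set (embed_db b S D w)", OF _ _ rows])
       (auto simp: embed_db_def)
  then have "lo \<le> agreement b S w z"
    using lo(1) assms(3) by (intro agreement_ge) auto
  then show ?thesis
    using agreement_le by (force simp: lo_def)
qed

text \<open>Truncating the last row w to its first Max D digits changes one row and hides all later
  digits of w from the mechanism.\<close>
lemma prob_guess_beyond_Max_le: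
  assumes "0 < b" "0 \<le> \<epsilon>" "0 \<le> \<delta>" and dp: "diff_private (dbs (b ^ S) (Suc n)) \<epsilon> \<delta> M"
    and D: "D \<in> dbs S n" "D \<noteq> []"
  shows "(\<Sum>w<b ^ S. measure_pmf.prob (M (embed_db b S D w))
            {z. z div b ^ (S - Suc (Max (set D))) = w div b ^ (S - Suc (Max (set D)))}) / b ^ S
         \<le> exp \<epsilon> / b + \<delta>"
proof -
  define h where "h = Max (set D)"
  have hS: "h < S" and below_h: "\<And>x. x \<in> set D \<Longrightarrow> x \<le> h"
    using D by (auto simp: h_def dbs_def)
  define c where "c = b ^ (S - Suc h)"
  have "S = Suc h + (S - Suc h)" "S - h = Suc (S - Suc h)"
    using hS by simp_all
  then have pow: "b ^ S = b ^ h * b * c" "c * b = b ^ (S - h)"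
    unfolding c_def by (metis power_add power_Suc2)+
  define Y where "Y w = map (\<lambda>x. digit_prefix b S x w) D @ [digit_prefix b S h w]" for w
  define B where "B w = {z. z div c = w div c}" for w
  have Y_top: "Y w = Y (w div (c * b) * (c * b))" for w
  proof -
    have top: "w div b ^ (S - h) = (w div b ^ (S - h) * b ^ (S - h)) div b ^ (S - h)"
      using assms(1) by simp
    have "digit_prefix b S x w = digit_prefix b S x (w div b ^ (S - h) * b ^ (S - h))"
      if "x \<le> h" for x
      using digit_prefix_cong[OF top that] hS by simp
    then show ?thesis
      using below_h by (simp add: Y_def pow(2) cong: map_cong)
  qed
  have "measure_pmf.prob (M (embed_db b S D w)) (B w) \<le> exp \<epsilon> * measure_pmf.prob (M (Y w)) (B w) + \<delta>"
    if "w < b ^ S" for w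
  proof (rule diff_private_le[OF dp embed_db_in_dbs[OF D(1) that]])
    show "Y w \<in> dbs (b ^ S) (Suc n)"
      using D(1) that digit_prefix_le[of b S _ w] by (auto simp: Y_def dbs_def intro: le_less_trans)
    show "embed_db b S D w = Y w \<or> neighbors (embed_db b S D w) (Y w)"
      unfolding embed_db_def Y_def by (rule neighbors_or_eq_snoc)
  qed (use assms in simp_all)
  then have "(\<Sum>w<b ^ S. measure_pmf.prob (M (embed_db b S D w)) (B w)) / b ^ S
      \<le> exp \<epsilon> * ((\<Sum>w<b ^ S. measure_pmf.prob (M (Y w)) (B w)) / b ^ S) + \<delta>"
    using assms(1) by (intro average_le_affine) simp_all
  also have "(\<Sum>w<b ^ S. measure_pmf.prob (M (Y w)) (B w)) \<le> real (b ^ h * c)"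
    using sum_prob_guess_digit_le[where N = "\<lambda>q. M (Y (q * (c * b)))" and a = "b ^ h"
        and b = b and c = c]
    by (simp add: pow(1) B_def flip: Y_top)
  finally show ?thesis
    using assms(1,2) by (simp add: pow(1) B_def c_def h_def divide_right_mono mult_left_mono)
qed

lemma prob_between_embed_db_le:
  assumes "0 < b" "D \<noteq> []" "set D \<subseteq> {..<S}"
  shows "measure_pmf.prob N {Min (set (embed_db b S D w))..Max (set (embed_db b S D w))}
      \<le> measure_pmf.prob N (agreement b S w -` {Min (set D)..Max (set D)})
        + measure_pmf.prob N {z. z div b ^ (S - Suc (Max (set D))) = w div b ^ (S - Suc (Max (set D)))}"
    (is "_ \<le> measure_pmf.prob N ?In + measure_pmf.prob N ?Guess")
proof -
  have "{Min (set (embed_db b S D w))..Max (set (embed_db b S D w))} \<subseteq> ?In \<union> ?Guess"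
    using agreement_between_or_guess[OF assms] by blast
  then have "measure_pmf.prob N {Min (set (embed_db b S D w))..Max (set (embed_db b S D w))}
      \<le> measure_pmf.prob N (?In \<union> ?Guess)"
    by (rule measure_pmf.finite_measure_mono) simp
  also have "\<dots> \<le> measure_pmf.prob N ?In + measure_pmf.prob N ?Guess"
    by (rule measure_subadditive) (simp_all add: measure_pmf.emeasure_eq_measure)
  finally show ?thesis .
qed

lemma expectation_embed_db_le:
  assumes "0 < b" "0 \<le> \<epsilon>" "0 \<le> \<delta>" and dp: "diff_private (dbs (b ^ S) (Suc n)) \<epsilon> \<delta> M"
    and D: "D \<in> dbs S n" "D \<noteq> []"
  shows "measure_pmf.expectation (pmf_of_set {..<b ^ S})
           (\<lambda>w. measure_pmf.prob (M (embed_db b S D w))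
                  {Min (set (embed_db b S D w))..Max (set (embed_db b S D w))})
         \<le> measure_pmf.prob (reduce_mech b S M D) {Min (set D)..Max (set D)} + (exp \<epsilon> / b + \<delta>)"
proof -
  define I where "I E = {Min (set E)..Max (set E)}" for E :: "nat list"
  define B where "B w = {z. z div b ^ (S - Suc (Max (set D))) = w div b ^ (S - Suc (Max (set D)))}"
    for w
  have "set D \<subseteq> {..<S}"
    using D(1) by (simp add: dbs_def)
  then have "(\<Sum>w<b ^ S. measure_pmf.prob (M (embed_db b S D w)) (I (embed_db b S D w))) / b ^ S
      \<le> (\<Sum>w<b ^ S. measure_pmf.prob (M (embed_db b S D w)) (agreement b S w -` I D)) / b ^ S
        + (\<Sum>w<b ^ S. measure_pmf.prob (M (embed_db b S D w)) (B w)) / b ^ S"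
    using prob_between_embed_db_le[OF assms(1) D(2)]
    by (simp add: I_def B_def sum_mono divide_right_mono flip: add_divide_distrib sum.distrib)
  also have "\<dots> \<le> measure_pmf.prob (reduce_mech b S M D) (I D) + (exp \<epsilon> / b + \<delta>)"
    using prob_guess_beyond_Max_le[OF assms] by (simp add: prob_reduce_mech[OF assms(1)] B_def)
  finally show ?thesis
    using assms(1) by (simp add: integral_pmf_of_lessThan I_def)
qed

lemma integrable_expectation_prob:
  "integrable (measure_pmf p)
     (\<lambda>x. measure_pmf.expectation (q x) (\<lambda>y. measure_pmf.prob (r x y) (A x y)))"
proof (rule measure_pmf.integrable_const_bound[where B = 1])
  have "integrable (measure_pmf (q x)) (\<lambda>y. measure_pmf.prob (r x y) (A x y))" for x
    by (rule measure_pmf.integrable_const_bound[where B = 1]) simp_all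
  then show "AE x in p. norm (measure_pmf.expectation (q x) (\<lambda>y. measure_pmf.prob (r x y) (A x y))) \<le> 1"
    by (auto intro!: measure_pmf.integral_le_const integral_nonneg)
qed simp

lemma success_lift_dist_le:
  assumes "0 < b" "0 \<le> \<epsilon>" "0 \<le> \<delta>" and dp: "diff_private (dbs (b ^ S) (Suc n)) \<epsilon> \<delta> M"
    and P: "set_pmf P \<subseteq> dbs S n" and "0 < n"
  shows "success (lift_dist b S P) M \<le> success P (reduce_mech b S M) + (exp \<epsilon> / b + \<delta>)"
proof -
  have int: "integrable (measure_pmf P)
      (\<lambda>D. measure_pmf.prob (reduce_mech b S M D) {Min (set D)..Max (set D)})"
    by (rule measure_pmf.integrable_const_bound[where B = 1]) simp_all
  have "success (lift_dist b S P) M \<le> measure_pmf.expectation P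
      (\<lambda>D. measure_pmf.prob (reduce_mech b S M D) {Min (set D)..Max (set D)} + (exp \<epsilon> / b + \<delta>))"
    unfolding success_lift_dist
  proof (rule integral_mono_AE[OF integrable_expectation_prob])
    show "integrable (measure_pmf P) (\<lambda>D. measure_pmf.prob (reduce_mech b S M D)
        {Min (set D)..Max (set D)} + (exp \<epsilon> / b + \<delta>))"
      using int by simp
    show "AE D in P. measure_pmf.expectation (pmf_of_set {..<b ^ S})
        (\<lambda>w. measure_pmf.prob (M (embed_db b S D w))
               {Min (set (embed_db b S D w))..Max (set (embed_db b S D w))})
      \<le> measure_pmf.prob (reduce_mech b S M D) {Min (set D)..Max (set D)} + (exp \<epsilon> / b + \<delta>)"
      using P assms(6) by (intro AE_pmfI expectation_embed_db_le[OF assms(1-4)]) (auto simp: dbs_def)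
  qed
  then show ?thesis
    using int by (simp add: success_eq)
qed

lemma success_two_point_le:
  assumes "0 \<le> \<epsilon>" "0 \<le> \<delta>" and dp: "diff_private (dbs 2 1) \<epsilon> \<delta> M"
  shows "success (pmf_of_set {[0], [1]}) M \<le> exp \<epsilon> / (exp \<epsilon> + 1) + \<delta>"
proof -
  define p0 where "p0 = measure_pmf.prob (M [0]) {0}"
  define r0 where "r0 = measure_pmf.prob (M [0]) {1}"
  define p1 where "p1 = measure_pmf.prob (M [1]) {1}"
  define r1 where "r1 = measure_pmf.prob (M [1]) {0}"
  have "{i. i < length [x :: nat] \<and> [x] ! i \<noteq> [y] ! i} = {0}" if "x \<noteq> y" for x y
    using that by auto
  then have "neighbors [0 :: nat] [1]" "neighbors [1 :: nat] [0]"
    by (simp_all add: neighbors_def)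
  moreover have "[0] \<in> dbs 2 1" "[1] \<in> dbs 2 1"
    by (auto simp: dbs_def)
  ultimately have privacy: "p0 \<le> exp \<epsilon> * r1 + \<delta>" "p1 \<le> exp \<epsilon> * r0 + \<delta>"
    using dp by (auto simp: diff_private_def p0_def r0_def p1_def r1_def)
  have "measure_pmf.prob N {0 :: nat} + measure_pmf.prob N {1} \<le> 1" for N
    using measure_pmf.finite_measure_Union[of "{0}" N "{1}"] measure_pmf.prob_le_1[of N "{0, 1}"]
    by (simp add: insert_commute)
  then have total: "p0 + r0 \<le> 1" "p1 + r1 \<le> 1"
    by (auto simp: p0_def r0_def p1_def r1_def add.commute)
  have "(p0 + p1) * (exp \<epsilon> + 1) \<le> 2 * exp \<epsilon> + 2 * \<delta>"
    using privacy mult_left_mono[OF total(1), of "exp \<epsilon>"] mult_left_mono[OF total(2), of "exp \<epsilon>"]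
    by (simp add: algebra_simps)
  then have "(p0 + p1) / 2 \<le> (exp \<epsilon> + \<delta>) / (exp \<epsilon> + 1)"
    by (simp add: pos_le_divide_eq add_pos_pos)
  also have "\<dots> = exp \<epsilon> / (exp \<epsilon> + 1) + \<delta> / (exp \<epsilon> + 1)"
    by (rule add_divide_distrib)
  also have "\<dots> \<le> exp \<epsilon> / (exp \<epsilon> + 1) + \<delta>"
    using assms(2) by (simp add: divide_le_eq add_pos_pos mult_le_cancel_left1)
  also have "(p0 + p1) / 2 = success (pmf_of_set {[0], [1]}) M"
    by (simp add: success_eq integral_pmf_of_set p0_def p1_def)
  finally show ?thesis .
qed

subsection \<open>The tower\<close>

lemma of_nat_nat_floor_inverse:
  fixes x :: real
  assumes "0 < x" "1 / x \<in> \<int>"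
  shows "real (nat \<lfloor>1 / x\<rfloor>) = 1 / x"
  using assms by (auto elim: Ints_cases)

lemma Stower_Suc: "1 \<le> n \<Longrightarrow> Stower \<delta> (Suc n) = nat \<lfloor>1 / \<delta> n\<rfloor> ^ Stower \<delta> n"
  by (cases n) simp_all

text \<open>The term e^\<epsilon> \<delta>(n) subtracted here is exactly what the reduction step adds back.\<close>
lemma hard_distribution_exists:
  fixes \<delta> :: "nat \<Rightarrow> real"
  assumes "0 \<le> \<epsilon>"
    and delta_pos: "\<forall>n\<ge>1. 0 < \<delta> n"
    and delta_mono: "\<forall>n\<ge>1. \<delta> (Suc n) \<le> \<delta> n"
    and b_int: "\<forall>n\<ge>1. 1 / \<delta> n \<in> \<int>"
    and "1 \<le> n"
  shows "\<exists>P. set_pmf P \<subseteq> dbs (Stower \<delta> n) n \<and>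
           (\<forall>M. diff_private (dbs (Stower \<delta> n) n) \<epsilon> (\<delta> n) M \<longrightarrow>
              success P M \<le> exp \<epsilon> / (exp \<epsilon> + 1) + (exp \<epsilon> + 1) * (\<Sum>j=1..n. \<delta> j) - exp \<epsilon> * \<delta> n)"
  using \<open>1 \<le> n\<close>
proof (induction n rule: nat_induct_at_least)
  case base
  have "success (pmf_of_set {[0], [1]}) M
      \<le> exp \<epsilon> / (exp \<epsilon> + 1) + (exp \<epsilon> + 1) * (\<Sum>j=1..1. \<delta> j) - exp \<epsilon> * \<delta> 1"
    if "diff_private (dbs (Stower \<delta> 1) 1) \<epsilon> (\<delta> 1) M" for M
    using success_two_point_le[of \<epsilon> "\<delta> 1" M] that assms(1) delta_pos[rule_format, of 1]
    by (simp add: algebra_simps)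
  moreover have "set_pmf (pmf_of_set {[0 :: nat], [1]}) \<subseteq> dbs (Stower \<delta> 1) 1"
    by (auto simp: dbs_def)
  ultimately show ?case
    by blast
next
  case (Suc n)
  define S where "S = Stower \<delta> n"
  define b where "b = nat \<lfloor>1 / \<delta> n\<rfloor>"
  have "0 < \<delta> n"
    using Suc.hyps delta_pos by simp
  then have b_inv: "real b = 1 / \<delta> n"
    using Suc.hyps b_int of_nat_nat_floor_inverse[of "\<delta> n"] by (simp add: b_def)
  with \<open>0 < \<delta> n\<close> have b_pos: "0 < b"
    by (metis of_nat_0_less_iff zero_less_divide_1_iff)
  have \<delta>: "0 < \<delta> (Suc n)" "\<delta> (Suc n) \<le> \<delta> n"
    using Suc.hyps delta_pos delta_mono by auto
  obtain P where P: "set_pmf P \<subseteq> dbs S n"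
    and IH: "\<And>M. diff_private (dbs S n) \<epsilon> (\<delta> n) M \<Longrightarrow>
               success P M \<le> exp \<epsilon> / (exp \<epsilon> + 1) + (exp \<epsilon> + 1) * (\<Sum>j=1..n. \<delta> j) - exp \<epsilon> * \<delta> n"
    using Suc.IH by (auto simp: S_def)
  have "success (lift_dist b S P) M
      \<le> exp \<epsilon> / (exp \<epsilon> + 1) + (exp \<epsilon> + 1) * (\<Sum>j=1..Suc n. \<delta> j) - exp \<epsilon> * \<delta> (Suc n)"
    if dp: "diff_private (dbs (b ^ S) (Suc n)) \<epsilon> (\<delta> (Suc n)) M" for M
  proof -
    have "diff_private (dbs S n) \<epsilon> (\<delta> n) (reduce_mech b S M)"
      using diff_private_reduce_mech[OF b_pos assms(1) _ dp] \<delta> by (auto intro: diff_private_mono)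
    then have "success (lift_dist b S P) M
        \<le> exp \<epsilon> / (exp \<epsilon> + 1) + (exp \<epsilon> + 1) * (\<Sum>j=1..n. \<delta> j) - exp \<epsilon> * \<delta> n
          + (exp \<epsilon> * \<delta> n + \<delta> (Suc n))"
      using success_lift_dist_le[OF b_pos assms(1) _ dp P] IH Suc.hyps \<delta>(1) b_inv
      by fastforce
    then show ?thesis
      using Suc.hyps by (simp add: algebra_simps)
  qed
  moreover have "set_pmf (lift_dist b S P) \<subseteq> dbs (b ^ S) (Suc n)"
    using set_pmf_lift_dist[OF b_pos P] .
  ultimately show ?case
    using Suc.hyps by (auto simp: Stower_Suc S_def b_def)
qed

theorem lemma3p3:
  fixes \<epsilon> \<beta> :: real and \<delta> :: "nat \<Rightarrow> real"
  assumes eps: "0 < \<epsilon>" "\<epsilon> < 1/4"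
    and beta: "0 < \<beta>" "\<beta> < 1/4"
    and delta_pos: "\<forall>n\<ge>1. 0 < \<delta> n"
    and delta_mono: "\<forall>n\<ge>1. \<delta> (Suc n) \<le> \<delta> n"
    and Pn: "\<forall>n\<ge>1. exp \<epsilon> / (exp \<epsilon> + 1) + (exp \<epsilon> + 1) * (\<Sum>j=1..n. \<delta> j) \<le> 1 - \<beta>"
    and b_int: "\<forall>n\<ge>1. 1 / \<delta> n \<in> \<int>"
  shows "\<forall>n\<ge>1. \<exists>\<D> :: nat list pmf. set_pmf \<D> \<subseteq> dbs (Stower \<delta> n) n \<and>
           (\<forall>M :: nat list \<Rightarrow> nat pmf.
              (\<forall>D\<in>dbs (Stower \<delta> n) n. set_pmf (M D) \<subseteq> {..<Stower \<delta> n}) \<longrightarrow>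
              diff_private (dbs (Stower \<delta> n) n) \<epsilon> (\<delta> n) M \<longrightarrow>
              measure_pmf.prob (bind_pmf \<D> (\<lambda>D. map_pmf (\<lambda>y. (D, y)) (M D)))
                 {(D, y). Min (set D) \<le> y \<and> y \<le> Max (set D)}
              \<le> exp \<epsilon> / (exp \<epsilon> + 1) + (exp \<epsilon> + 1) * (\<Sum>j=1..n. \<delta> j))"
proof (intro allI impI)
  fix n :: nat
  assume "1 \<le> n"
  have "0 \<le> \<epsilon>"
    using eps(1) by simp
  from hard_distribution_exists[OF this delta_pos delta_mono b_int \<open>1 \<le> n\<close>]
  obtain P where P: "set_pmf P \<subseteq> dbs (Stower \<delta> n) n"
    and bound: "\<forall>M. diff_private (dbs (Stower \<delta> n) n) \<epsilon> (\<delta> n) M \<longrightarrow>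
      success P M \<le> exp \<epsilon> / (exp \<epsilon> + 1) + (exp \<epsilon> + 1) * (\<Sum>j=1..n. \<delta> j) - exp \<epsilon> * \<delta> n"
    by blast
  have "0 \<le> exp \<epsilon> * \<delta> n"
    using \<open>1 \<le> n\<close> delta_pos by (simp add: less_imp_le)
  with bound have "success P M \<le> exp \<epsilon> / (exp \<epsilon> + 1) + (exp \<epsilon> + 1) * (\<Sum>j=1..n. \<delta> j)"
    if "diff_private (dbs (Stower \<delta> n) n) \<epsilon> (\<delta> n) M" for M
    using that by force
  with P show "\<exists>\<D> :: nat list pmf. set_pmf \<D> \<subseteq> dbs (Stower \<delta> n) n \<and>
           (\<forall>M :: nat list \<Rightarrow> nat pmf.
              (\<forall>D\<in>dbs (Stower \<delta> n) n. set_pmf (M D) \<subseteq> {..<Stower \<delta> n}) \<longrightarrow>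
              diff_private (dbs (Stower \<delta> n) n) \<epsilon> (\<delta> n) M \<longrightarrow>
              measure_pmf.prob (bind_pmf \<D> (\<lambda>D. map_pmf (\<lambda>y. (D, y)) (M D)))
                 {(D, y). Min (set D) \<le> y \<and> y \<le> Max (set D)}
              \<le> exp \<epsilon> / (exp \<epsilon> + 1) + (exp \<epsilon> + 1) * (\<Sum>j=1..n. \<delta> j))"
    unfolding success_def by blast
qed

end
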